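(* Let $\varepsilon>0$ and let $A$ be a real symmetric matrix with top eigenvector $u_1$ (a unit vector), whose two largest eigenvalues are $\lambda_1=1+2\varepsilon$ (with eigenvector $u_1$) and $\lambda_2=1$, and such that $|\lambda_i|\le 1$ for all $i\ge 2$. Let $w$ be a vector with $\langle u_1,w\rangle^2\le\varepsilon/2$ and $\langle u_1,Aw\rangle^2\le\varepsilon/2$. Then \[ \left\|A\left(I-ww^\top\right)\right\|_{\mathrm{op}} > (1+\varepsilon)\min_{\|u\|_2=1}\left\|A\left(I-uu^\top\right)\right\|_{\mathrm{op}}. \]
   Context: $\|\cdot\|_{\mathrm{op}}$ denotes the spectral norm. *)

theory Defs
  imports "HOL-Analysis.Analysis"
begin

definition outer :: "real^'n \<Rightarrow> real^'n \<Rightarrow> real^'n^'n" where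
  "outer u v = (\<chi> i j. u $ i * v $ j)"

definition opnorm :: "real^'n^'n \<Rightarrow> real" where
  "opnorm M = onorm (\<lambda>x. M *v x)"

end

theory Submission
  imports Defs
begin

text \<open>Deflating along \<open>u\<^sub>1\<close> leaves \<open>A\<close> acting on the invariant subspace \<open>u\<^sub>1\<^sup>\<bottom>\<close>, where
  every eigenvalue has modulus at most 1. Maximising the Rayleigh quotient of \<open>A\<^sup>2\<close> on that
  subspace yields an eigenvector of \<open>A\<^sup>2\<close> whose eigenvalue is the squared norm of \<open>A\<close> there,
  and from it an eigenvector of \<open>A\<close> for the eigenvalue \<open>\<pm>\<close> that norm; hence
  \<open>\<parallel>A(I - u\<^sub>1u\<^sub>1\<^sup>T)\<parallel> \<le> 1\<close> and the minimum is at most 1. On the other hand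
  \<open>u\<^sub>1\<^sup>T A(I - ww\<^sup>T) u\<^sub>1 = \<lambda>\<^sub>1 - \<langle>u\<^sub>1,w\<rangle>\<langle>u\<^sub>1,Aw\<rangle> \<ge> 1 + 3\<epsilon>/2\<close>, because the cross term is at
  most \<open>\<epsilon>/2\<close>.\<close>

lemma outer_mult_vec: "outer u v *v x = (v \<bullet> x) *\<^sub>R u"
  by (simp add: vec_eq_iff outer_def matrix_vector_mult_def inner_vec_def
      sum_distrib_left mult.commute mult.left_commute)

lemma deflate_mult_vec: "(A ** (mat 1 - outer u u)) *v x = A *v (x - (u \<bullet> x) *\<^sub>R u)"
  by (simp add: matrix_vector_mul_assoc[symmetric] matrix_vector_mult_diff_rdistrib outer_mult_vec)

lemma symmetric_matrix_inner:
  fixes A :: "real^'n^'n"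
  assumes "transpose A = A"
  shows "(A *v x) \<bullet> y = x \<bullet> (A *v y)"
  by (metis assms dot_lmul_matrix vector_transpose_matrix)

lemma norm_mult_vec_le_opnorm: "norm (M *v x) \<le> opnorm M * norm x"
  unfolding opnorm_def
  by (rule onorm) (simp add: linear_conv_bounded_linear)

lemma opnorm_le:
  assumes "\<And>x. norm (M *v x) \<le> b * norm x"
  shows "opnorm M \<le> b"
  unfolding opnorm_def by (rule onorm_le) (rule assms)

lemma opnorm_nonneg: "opnorm M \<ge> 0"
  unfolding opnorm_def
  by (rule onorm_pos_le) (simp add: linear_conv_bounded_linear)

lemma inner_mult_vec_le_opnorm:
  assumes "norm u = 1"
  shows "u \<bullet> (M *v u) \<le> opnorm M"
proof -
  have "u \<bullet> (M *v u) \<le> norm u * norm (M *v u)" by (rule norm_cauchy_schwarz)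
  also have "\<dots> \<le> opnorm M" using norm_mult_vec_le_opnorm[of M u] assms by simp
  finally show ?thesis .
qed

lemma opnorm_deflate_le:
  fixes A :: "real^'n^'n"
  assumes u: "norm u = 1" and c: "c \<ge> 0"
    and bound: "\<And>p. u \<bullet> p = 0 \<Longrightarrow> norm (A *v p) \<le> c * norm p"
  shows "opnorm (A ** (mat 1 - outer u u)) \<le> c"
proof (rule opnorm_le)
  fix x
  define p where "p = x - (u \<bullet> x) *\<^sub>R u"
  have uu: "u \<bullet> u = 1" using u by (simp add: dot_square_norm)
  then have "u \<bullet> p = 0" by (simp add: p_def inner_diff_right)
  have "p \<bullet> p = x \<bullet> x - (u \<bullet> x)\<^sup>2"
    using uu by (simp add: p_def inner_diff_left inner_diff_right inner_commute power2_eq_square)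
  then have "norm p \<le> norm x" by (simp add: norm_eq_sqrt_inner)
  with bound[OF \<open>u \<bullet> p = 0\<close>] c show "norm ((A ** (mat 1 - outer u u)) *v x) \<le> c * norm x"
    by (simp add: deflate_mult_vec p_def) (meson mult_left_mono order_trans)
qed

lemma Inf_deflate_opnorm_le:
  assumes "norm u = 1"
  shows "Inf {opnorm (A ** (mat 1 - outer v v)) | v. norm v = 1} \<le> opnorm (A ** (mat 1 - outer u u))"
proof (rule cInf_lower)
  show "bdd_below {opnorm (A ** (mat 1 - outer v v)) | v. norm v = 1}"
    by (rule bdd_belowI[where m = 0]) (auto simp: opnorm_nonneg)
qed (use assms in auto)

lemma quadratic_nonneg_imp_linear_coeff_zero:
  fixes a q :: real
  assumes "\<And>t. 0 \<le> t * a + t\<^sup>2 * q"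
  shows "a = 0"
proof (rule ccontr)
  assume "a \<noteq> 0"
  define d where "d = \<bar>q\<bar> + 1"
  define t where "t = - a / (2 * d)"
  have d: "d > 0" "q \<le> d" by (auto simp: d_def)
  have "t * a + t\<^sup>2 * q \<le> t * a + t\<^sup>2 * d"
    using d by (simp add: mult_left_mono)
  also have "\<dots> = - a\<^sup>2 / (4 * d)"
    using d by (simp add: t_def field_simps power2_eq_square)
  also have "\<dots> < 0"
    using d \<open>a \<noteq> 0\<close> by (simp add: divide_neg_pos)
  finally show False using assms[of t] by simp
qed

lemma symmetric_matrix_rayleigh_max:
  fixes M :: "real^'n^'n"
  assumes sym: "transpose M = M" and S: "subspace S" and inv: "\<And>z. z \<in> S \<Longrightarrow> M *v z \<in> S"
    and nontriv: "S \<noteq> {0}"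
  obtains x s where "x \<in> S" "norm x = 1" "M *v x = s *\<^sub>R x"
    "\<And>z. z \<in> S \<Longrightarrow> z \<bullet> (M *v z) \<le> s * (z \<bullet> z)"
proof -
  define K where "K = S \<inter> sphere 0 1"
  have "compact K"
    unfolding K_def by (intro closed_Int_compact closed_subspace S compact_sphere)
  obtain y where "y \<in> S" "y \<noteq> 0" using nontriv subspace_0[OF S] by blast
  then have "y /\<^sub>R norm y \<in> K" by (simp add: K_def S subspace_scale)
  then have "K \<noteq> {}" by blast
  have "continuous_on K (\<lambda>z. z \<bullet> (M *v z))" by (intro continuous_intros)
  then obtain x where "x \<in> K" and x_max: "\<And>z. z \<in> K \<Longrightarrow> z \<bullet> (M *v z) \<le> x \<bullet> (M *v x)"
    using continuous_attains_sup[OF \<open>compact K\<close> \<open>K \<noteq> {}\<close>] by blast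
  define s where "s = x \<bullet> (M *v x)"
  have x: "x \<in> S" "norm x = 1" using \<open>x \<in> K\<close> by (auto simp: K_def)
  have s_max: "z \<bullet> (M *v z) \<le> s * (z \<bullet> z)" if "z \<in> S" for z
  proof (cases "z = 0")
    case False
    then have "z /\<^sub>R norm z \<in> K" using that by (simp add: K_def S subspace_scale)
    then have "(z /\<^sub>R norm z) \<bullet> (M *v (z /\<^sub>R norm z)) \<le> s" unfolding s_def by (rule x_max)
    then have "(z \<bullet> (M *v z)) / (norm z)\<^sup>2 \<le> s"
      by (simp add: matrix_vector_mult_scaleR power2_eq_square divide_inverse mult_ac)
    with False show ?thesis by (simp add: pos_divide_le_eq dot_square_norm)
  qed simp
  \<comment> \<open>\<open>Q\<close> is nonnegative on \<open>S\<close> and vanishes at \<open>x\<close>, so its first variation at \<open>x\<close> in the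
    direction \<open>B = (sI - M)x\<close>, which is \<open>2\<parallel>B\<parallel>\<^sup>2\<close>, must vanish.\<close>
  define Q where "Q z = s * (z \<bullet> z) - z \<bullet> (M *v z)" for z
  define B where "B = s *\<^sub>R x - M *v x"
  have "B \<in> S" unfolding B_def using x inv by (simp add: S subspace_diff subspace_scale)
  have "0 \<le> t * (2 * (B \<bullet> B)) + t\<^sup>2 * Q B" for t
  proof -
    have "x + t *\<^sub>R B \<in> S" using x \<open>B \<in> S\<close> by (simp add: S subspace_add subspace_scale)
    then have "0 \<le> Q (x + t *\<^sub>R B)" using s_max by (simp add: Q_def)
    also have "Q (x + t *\<^sub>R B) = Q x + t * (2 * (B \<bullet> (s *\<^sub>R x - M *v x))) + t\<^sup>2 * Q B"
      using symmetric_matrix_inner[OF sym, of B x]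
      by (simp add: Q_def power2_eq_square inner_commute algebra_simps)
    also have "Q x = 0" using x by (simp add: Q_def s_def dot_square_norm)
    finally show ?thesis by (simp add: B_def)
  qed
  then have "B = 0" using quadratic_nonneg_imp_linear_coeff_zero by fastforce
  then have "M *v x = s *\<^sub>R x" by (simp add: B_def)
  with x s_max that show ?thesis by blast
qed

lemma eigenvector_of_square_eigenvector:
  fixes A :: "real^'n^'n"
  assumes "A *v (A *v x) = (r * r) *\<^sub>R x" and "x \<noteq> 0" and "r \<ge> 0"
  obtains v \<mu> where "v \<in> {x, A *v x + r *\<^sub>R x}" "v \<noteq> 0" "A *v v = \<mu> *\<^sub>R v" "\<bar>\<mu>\<bar> = r"
proof (cases "A *v x + r *\<^sub>R x = 0")
  case True
  then have "A *v x = (- r) *\<^sub>R x" by (simp add: eq_neg_iff_add_eq_0)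
  with that[of x "- r"] assms(2,3) show ?thesis by simp
next
  case False
  have "A *v (A *v x + r *\<^sub>R x) = r *\<^sub>R (A *v x + r *\<^sub>R x)"
    using assms(1) by (simp add: algebra_simps)
  with that[of "A *v x + r *\<^sub>R x" r] False assms(3) show ?thesis by simp
qed

lemma symmetric_matrix_norm_le_eigenvalue_bound:
  fixes A :: "real^'n^'n"
  assumes sym: "transpose A = A" and S: "subspace S" and inv: "\<And>z. z \<in> S \<Longrightarrow> A *v z \<in> S"
    and eig: "\<And>\<mu> v. v \<in> S \<Longrightarrow> v \<noteq> 0 \<Longrightarrow> A *v v = \<mu> *\<^sub>R v \<Longrightarrow> \<bar>\<mu>\<bar> \<le> c"
    and y: "y \<in> S"
  shows "norm (A *v y) \<le> c * norm y"
proof (cases "y = 0")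
  case False
  have sym_sq: "transpose (A ** A) = A ** A" using sym by (simp add: matrix_transpose_mul)
  have inner_sq: "z \<bullet> ((A ** A) *v z) = (norm (A *v z))\<^sup>2" for z
    using symmetric_matrix_inner[OF sym, of z "A *v z"]
    by (simp add: matrix_vector_mul_assoc[symmetric] power2_norm_eq_inner)
  have sq_inv: "(A ** A) *v z \<in> S" if "z \<in> S" for z
    using inv[OF inv[OF that]] by (simp add: matrix_vector_mul_assoc)
  have "S \<noteq> {0}" using y False by blast
  obtain x s where x: "x \<in> S" "norm x = 1" and x_eig: "(A ** A) *v x = s *\<^sub>R x"
    and s_max: "\<And>z. z \<in> S \<Longrightarrow> z \<bullet> ((A ** A) *v z) \<le> s * (z \<bullet> z)"
    using symmetric_matrix_rayleigh_max[OF sym_sq S sq_inv \<open>S \<noteq> {0}\<close>] by blast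
  have "s = (norm (A *v x))\<^sup>2"
    using inner_sq[of x] x_eig x by (simp add: dot_square_norm)
  then have "s \<ge> 0" by simp
  define r where "r = sqrt s"
  have r: "r \<ge> 0" "r * r = s" using \<open>s \<ge> 0\<close> by (simp_all add: r_def)
  have "A *v (A *v x) = (r * r) *\<^sub>R x" using x_eig r by (simp add: matrix_vector_mul_assoc)
  moreover have "x \<noteq> 0" using x by auto
  ultimately obtain v \<mu> where v: "v \<in> {x, A *v x + r *\<^sub>R x}" "v \<noteq> 0" "A *v v = \<mu> *\<^sub>R v"
    and "\<bar>\<mu>\<bar> = r"
    using eigenvector_of_square_eigenvector[of A x r] r(1) by blast
  moreover have "v \<in> S"
    using v(1) x inv subspace_add[OF S] subspace_scale[OF S] by auto
  ultimately have "r \<le> c" using eig v(2,3) by blast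
  have "(norm (A *v y))\<^sup>2 \<le> s * (norm y)\<^sup>2"
    using s_max[OF y] inner_sq[of y] by (simp add: dot_square_norm)
  also have "\<dots> \<le> (c * norm y)\<^sup>2"
  proof -
    have "s \<le> c\<^sup>2" using power_mono[OF \<open>r \<le> c\<close> \<open>r \<ge> 0\<close>, of 2] r by (simp add: power2_eq_square)
    then show ?thesis by (simp add: power_mult_distrib mult_right_mono)
  qed
  finally show ?thesis
    by (rule power2_le_imp_le) (use r \<open>r \<le> c\<close> in simp)
qed simp

lemma mult_le_of_squares_le:
  fixes x y e :: real
  assumes "x\<^sup>2 \<le> e" and "y\<^sup>2 \<le> e"
  shows "x * y \<le> e"
  using sum_squares_bound[of x y] assms by linarith

lemma opnorm_deflate_eigenvector_le:
  fixes A :: "real^'n^'n"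
  assumes sym: "transpose A = A" and u: "norm u = 1" and u_eig: "A *v u = lam *\<^sub>R u"
    and simple: "\<And>v. A *v v = lam *\<^sub>R v \<Longrightarrow> v \<in> span {u}"
    and rest: "\<And>\<mu> v. v \<noteq> 0 \<Longrightarrow> A *v v = \<mu> *\<^sub>R v \<Longrightarrow> \<mu> \<noteq> lam \<Longrightarrow> \<bar>\<mu>\<bar> \<le> c"
    and c: "c \<ge> 0"
  shows "opnorm (A ** (mat 1 - outer u u)) \<le> c"
proof (rule opnorm_deflate_le[OF u c])
  have orth_inv: "u \<bullet> (A *v z) = 0" if "u \<bullet> z = 0" for z
    using symmetric_matrix_inner[OF sym, of u z] that by (simp add: u_eig)
  have orth_eig: "\<bar>\<mu>\<bar> \<le> c" if v: "u \<bullet> v = 0" "v \<noteq> 0" "A *v v = \<mu> *\<^sub>R v" for \<mu> v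
  proof (rule rest[OF v(2,3)])
    show "\<mu> \<noteq> lam"
    proof
      assume "\<mu> = lam"
      then obtain a where "v = a *\<^sub>R u" using simple v(3) by (auto simp: span_singleton)
      with v(1,2) show False by simp
    qed
  qed
  show "norm (A *v p) \<le> c * norm p" if "u \<bullet> p = 0" for p
    by (rule symmetric_matrix_norm_le_eigenvalue_bound[OF sym subspace_hyperplane[of u]])
      (use orth_inv orth_eig that in auto)
qed

theorem lemma2p7:
  fixes A :: "real^'n^'n" and u1 w :: "real^'n" and \<epsilon> :: real
  assumes eps: "\<epsilon> > 0"
    and sym: "transpose A = A"
    and u1_unit: "norm u1 = 1"
    and u1_eig: "A *v u1 = (1 + 2*\<epsilon>) *\<^sub>R u1"
    and lam1_simple: "\<And>v. A *v v = (1 + 2*\<epsilon>) *\<^sub>R v \<Longrightarrow> v \<in> span {u1}"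
    and lam2: "\<exists>v. v \<noteq> 0 \<and> A *v v = v"
    and rest: "\<And>\<mu> v. v \<noteq> 0 \<Longrightarrow> A *v v = \<mu> *\<^sub>R v \<Longrightarrow> \<mu> \<noteq> 1 + 2*\<epsilon> \<Longrightarrow> \<bar>\<mu>\<bar> \<le> 1"
    and w1: "(u1 \<bullet> w)^2 \<le> \<epsilon> / 2"
    and w2: "(u1 \<bullet> (A *v w))^2 \<le> \<epsilon> / 2"
  shows "opnorm (A ** (mat 1 - outer w w)) >
         (1 + \<epsilon>) * Inf {opnorm (A ** (mat 1 - outer u u)) | u. norm u = 1}"
proof -
  have "opnorm (A ** (mat 1 - outer u1 u1)) \<le> 1"
    by (rule opnorm_deflate_eigenvector_le[OF sym u1_unit u1_eig lam1_simple rest]) simp_all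
  then have Inf_le: "Inf {opnorm (A ** (mat 1 - outer u u)) | u. norm u = 1} \<le> 1"
    using Inf_deflate_opnorm_le[OF u1_unit, of A] by linarith
  have "u1 \<bullet> ((A ** (mat 1 - outer w w)) *v u1) = 1 + 2*\<epsilon> - (u1 \<bullet> w) * (u1 \<bullet> (A *v w))"
    using u1_unit by (simp add: deflate_mult_vec matrix_vector_mult_diff_distrib
        matrix_vector_mult_scaleR u1_eig inner_diff_right inner_commute dot_square_norm)
  with mult_le_of_squares_le[OF w1 w2] inner_mult_vec_le_opnorm[OF u1_unit, of "A ** (mat 1 - outer w w)"]
  have "1 + 3/2*\<epsilon> \<le> opnorm (A ** (mat 1 - outer w w))" by linarith
  moreover have "(1 + \<epsilon>) * Inf {opnorm (A ** (mat 1 - outer u u)) | u. norm u = 1} \<le> 1 + \<epsilon>"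
    using mult_left_mono[OF Inf_le, of "1 + \<epsilon>"] eps by simp
  ultimately show ?thesis using eps by linarith
qed

end
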